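(* Let $P\subseteq M_{\mathbb{R}}$ be a simplicial reflexive polytope having facets $F$ and $-F$. Let the vertex set of $F$ be $\{e_1,\dots,e_d\}$ and let $e_1^*,\dots,e_d^*$ be the dual $\mathbb{R}$-basis of $N_{\mathbb{R}}$. For $i=1,\dots,d$ let $F_i$ be the unique facet of $P$ with $F_i\cap F=\mathrm{conv}(e_j: j\neq i)$. Let $u=\eta_F$. Let $v$ be a vertex of $P$ with $\langle u,v\rangle=0$, and write $v=\sum_{i=1}^d q_ie_i$ with $q_i\in\mathbb{Q}$. Then for every $i=1,\dots,d$: $$q_i<0\iff q_i=-1\iff v\in F_i,$$ and in this case $e_i^*=\eta_{F_i}-u\in P^*\cap N$. Moreover, there are subsets $I,J\subseteq\{1,\dots,d\}$ with $I\cap J=\emptyset$ and $|I|=|J|$ such that $v=\sum_{j\in J}e_j-\sum_{i\in I}e_i$.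
   Context: $M\cong\mathbb{Z}^d$, $N=\mathrm{Hom}(M,\mathbb{Z})$ with pairing $\langle\cdot,\cdot\rangle$, $M_{\mathbb{R}},N_{\mathbb{R}}$ the real extensions. A Fano polytope is a $d$-dimensional lattice polytope in $M_{\mathbb{R}}$ with $0$ in its interior and primitive vertices; for a facet $F$, $\eta_F\in N_{\mathbb{R}}$ is the unique vector with $\langle\eta_F,x\rangle=-1$ for all $x\in F$. The dual polytope is $P^*=\{x\in N_{\mathbb{R}}:\langle x,y\rangle\ge-1\ \forall y\in P\}$, whose vertices are the $\eta_F$; $P$ is reflexive if $P^*$ is a lattice polytope; simplicial if each facet is a simplex. Note $e_1,\dots,e_d$ need not be a lattice basis. *)

theory Defs
  imports "HOL-Analysis.Analysis"
begin

text \<open>We identify M with the integer vectors in real^'n (M_R = real^'n) and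
  N = Hom(M,Z) with the integer vectors in real^'n as well (N_R = real^'n),
  the pairing being the standard inner product.\<close>

definition lattice_pt :: "real^'n \<Rightarrow> bool" where
  "lattice_pt x \<longleftrightarrow> (\<forall>i. x $ i \<in> \<int>)"

definition primitive :: "real^'n \<Rightarrow> bool" where
  "primitive x \<longleftrightarrow> lattice_pt x \<and> x \<noteq> 0 \<and>
     (\<forall>y (k::int). lattice_pt y \<and> x = of_int k *\<^sub>R y \<longrightarrow> \<bar>k\<bar> = 1)"

definition lattice_polytope :: "(real^'n) set \<Rightarrow> bool" where
  "lattice_polytope P \<longleftrightarrow> (\<exists>S. finite S \<and> (\<forall>x\<in>S. lattice_pt x) \<and> P = convex hull S)"

definition fano_polytope :: "(real^'n) set \<Rightarrow> bool" where
  "fano_polytope P \<longleftrightarrow> lattice_polytope P \<and> aff_dim P = int CARD('n) \<and>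
     0 \<in> interior P \<and> (\<forall>v. v extreme_point_of P \<longrightarrow> primitive v)"

definition eta :: "(real^'n) set \<Rightarrow> real^'n" where
  "eta F = (THE w. \<forall>x\<in>F. inner w x = -1)"

definition dual_polytope :: "(real^'n) set \<Rightarrow> (real^'n) set" where
  "dual_polytope P = {x. \<forall>y\<in>P. inner x y \<ge> -1}"

definition reflexive_polytope :: "(real^'n) set \<Rightarrow> bool" where
  "reflexive_polytope P \<longleftrightarrow> fano_polytope P \<and> lattice_polytope (dual_polytope P)"

definition simplicial_polytope :: "(real^'n) set \<Rightarrow> bool" where
  "simplicial_polytope P \<longleftrightarrow> (\<forall>F. F facet_of P \<longrightarrow> (\<exists>k. k simplex F))"

end

theory Submission
  imports Defs
begin

(* The vertices e_j of F and -e_j of -F are lattice points with <u, e_j> = -1,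
   so <u, v> = 0 says that the q_i sum to 0.  Let G be a facet containing every e_j with j ~= i
   but not e_i, and w = eta G, a lattice point since P is reflexive.  Then <w, e_j> = -1 for
   j ~= i and <w, e_i> is 0 or 1, so <w, v> = q_i (<w, e_i> + 1) is an integer >= -1.  If q_i < 0
   this forces v in G; and <w, e_i> = 1 is impossible, since G would then contain the d + 1
   vertices v, -e_i and e_j (j ~= i) of P, while a simplicial facet has only d.  Hence q_i = -1,
   and w - u agrees with e_i^* on the basis e_j.  The hypotheses are symmetric under
   (F, e, q) -> (-F, -e, -q), which turns the case q_i > 0 into q_i < 0 and gives q_i = 1.
   So every q_i lies in {-1, 0, 1}, and sum q = 0 says that there are as many 1s as -1s. *)

lemma Ints_less_imp_add_one_le:
  fixes x y :: real
  assumes "x \<in> \<int>" "y \<in> \<int>" "x < y"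
  shows "x + 1 \<le> y"
proof -
  obtain m n where "x = of_int m" "y = of_int n"
    using assms(1,2) by (auto elim!: Ints_cases)
  then show ?thesis
    using assms(3) by simp
qed

lemma lattice_pt_inner_Ints: "lattice_pt x \<Longrightarrow> lattice_pt y \<Longrightarrow> inner x (y::real^'n) \<in> \<int>"
  unfolding lattice_pt_def inner_vec_def by (intro Ints_sum Ints_mult) auto

lemma lattice_pt_diff: "lattice_pt x \<Longrightarrow> lattice_pt y \<Longrightarrow> lattice_pt (x - (y::real^'n))"
  unfolding lattice_pt_def by auto

lemma extreme_points_of_uminus_image:
  fixes S :: "'a::real_vector set"
  shows "{x. x extreme_point_of (uminus ` S)} = uminus ` {x. x extreme_point_of S}"
proof -
  have "open_segment (- a) (- b) = uminus ` open_segment a b" for a b :: 'a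
    using open_segment_linear_image[of uminus a b] by (simp add: linear_uminus)
  then have pt: "(- x) extreme_point_of (uminus ` S) \<longleftrightarrow> x extreme_point_of S" for x
    by (auto simp: extreme_point_of_def inj_image_mem_iff)
  show ?thesis
  proof (intro set_eqI iffI)
    fix x
    assume "x \<in> {x. x extreme_point_of uminus ` S}"
    then have "- x \<in> {x. x extreme_point_of S}"
      using pt[of "- x"] by simp
    then show "x \<in> uminus ` {x. x extreme_point_of S}"
      by (rule rev_image_eqI) simp
  qed (use pt in auto)
qed

lemma hyperplane_equation_unique:
  fixes S :: "'a::euclidean_space set"
  assumes "aff_dim S = int DIM('a) - 1"
    and "\<forall>x\<in>S. inner w x = -1" "\<forall>x\<in>S. inner w' x = -1"
  shows "w = w'"
proof (rule ccontr)
  assume "w \<noteq> w'"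
  have "affine hull S \<subseteq> {x. inner w x = -1}"
    using assms(2) by (intro hull_minimal) (auto simp: affine_hyperplane)
  then have "aff_dim (insert 0 S) = int DIM('a)"
    using assms(1) by (auto simp: aff_dim_insert)
  moreover have "aff_dim (insert 0 S) \<le> aff_dim {x. inner (w - w') x = 0}"
    using assms(2,3) by (intro aff_dim_subset) (auto simp: inner_diff_left)
  ultimately show False
    using \<open>w \<noteq> w'\<close> by simp
qed

lemma fano_polytopeD:
  fixes P :: "(real^'n) set"
  assumes "fano_polytope P"
  shows "polyhedron P" "compact P" "convex P" "aff_dim P = int CARD('n)" "0 \<in> interior P"
    "\<And>v. v extreme_point_of P \<Longrightarrow> lattice_pt v"
proof -
  have "polytope P"
    using assms unfolding fano_polytope_def lattice_polytope_def polytope_def by blast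
  then show "polyhedron P" "compact P" "convex P"
    by (auto simp: polytope_imp_polyhedron polytope_imp_compact polytope_imp_convex)
  show "aff_dim P = int CARD('n)" "0 \<in> interior P" "\<And>v. v extreme_point_of P \<Longrightarrow> lattice_pt v"
    using assms by (auto simp: fano_polytope_def primitive_def)
qed

lemma fano_facet_normal:
  fixes P G :: "(real^'n) set"
  assumes "fano_polytope P" "G facet_of P"
  obtains w where "\<And>x. x \<in> P \<Longrightarrow> -1 \<le> inner w x" "G = P \<inter> {x. inner w x = -1}"
proof -
  obtain a b where ab: "a \<noteq> 0" "P \<subseteq> {x. a \<bullet> x \<le> b}" "G = P \<inter> {x. a \<bullet> x = b}"
    using facet_of_polyhedron[OF fano_polytopeD(1)[OF assms(1)] assms(2)] by blast
  obtain \<epsilon> where "\<epsilon> > 0" "ball 0 \<epsilon> \<subseteq> P"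
    using fano_polytopeD(5)[OF assms(1)] by (meson mem_interior)
  then have "(\<epsilon> / (2 * norm a)) *\<^sub>R a \<in> P"
    using ab(1) by auto
  then have "\<epsilon> / (2 * norm a) * (a \<bullet> a) \<le> b"
    using ab(2) by auto
  moreover have "0 < \<epsilon> / (2 * norm a) * (a \<bullet> a)"
    using \<open>\<epsilon> > 0\<close> ab(1) by simp
  ultimately have "b > 0"
    by linarith
  show ?thesis
  proof
    show "-1 \<le> inner ((-1 / b) *\<^sub>R a) x" if "x \<in> P" for x
      using ab(2) that \<open>b > 0\<close> by (auto simp: divide_le_eq_1)
    show "G = P \<inter> {x. inner ((-1 / b) *\<^sub>R a) x = -1}"
      using ab(3) \<open>b > 0\<close> by auto
  qed
qed

lemma eta_eqI:
  fixes P G :: "(real^'n) set"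
  assumes "fano_polytope P" "G facet_of P" "\<forall>x\<in>G. inner w x = -1"
  shows "eta G = w"
  unfolding eta_def
proof (rule the_equality)
  have "aff_dim G = int DIM(real^'n) - 1"
    using assms(2) fano_polytopeD(4)[OF assms(1)] by (simp add: facet_of_def)
  then show "w' = w" if "\<forall>x\<in>G. inner w' x = -1" for w'
    using hyperplane_equation_unique that assms(3) by blast
qed (fact assms(3))

lemma eta_facet:
  fixes P G :: "(real^'n) set"
  assumes "fano_polytope P" "G facet_of P"
  shows "x \<in> P \<Longrightarrow> -1 \<le> inner (eta G) x" and "G = P \<inter> {x. inner (eta G) x = -1}"
proof -
  obtain w where w: "\<And>x. x \<in> P \<Longrightarrow> -1 \<le> inner w x" "G = P \<inter> {x. inner w x = -1}"
    using fano_facet_normal[OF assms] by blast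
  then have "eta G = w"
    using eta_eqI[OF assms] by blast
  then show "x \<in> P \<Longrightarrow> -1 \<le> inner (eta G) x" "G = P \<inter> {x. inner (eta G) x = -1}"
    using w by auto
qed

lemma eta_extreme_point_of_dual:
  fixes P G :: "(real^'n) set"
  assumes "fano_polytope P" "G facet_of P"
  shows "eta G extreme_point_of dual_polytope P"
  unfolding extreme_point_of_def
proof (intro conjI ballI notI)
  show "eta G \<in> dual_polytope P"
    using eta_facet(1)[OF assms] by (auto simp: dual_polytope_def)
next
  fix a b
  assume a: "a \<in> dual_polytope P" and b: "b \<in> dual_polytope P" and "eta G \<in> open_segment a b"
  then obtain t where t: "a \<noteq> b" "0 < t" "t < 1" "eta G = (1 - t) *\<^sub>R a + t *\<^sub>R b"
    by (auto simp: in_segment)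
  have "inner a x = -1 \<and> inner b x = -1" if "x \<in> G" for x
  proof -
    have "x \<in> P" "inner (eta G) x = -1"
      using that eta_facet(2)[OF assms] by auto
    then have ge: "-1 \<le> inner a x" "-1 \<le> inner b x"
      and "(1 - t) * inner a x + t * inner b x = -1"
      using a b t(4) by (auto simp: dual_polytope_def inner_add_left)
    then have "(1 - t) * (inner a x + 1) + t * (inner b x + 1) = 0"
      by (simp add: algebra_simps)
    moreover have "0 \<le> (1 - t) * (inner a x + 1)" "0 \<le> t * (inner b x + 1)"
      using ge t(2,3) by simp_all
    ultimately have "(1 - t) * (inner a x + 1) = 0" "t * (inner b x + 1) = 0"
      by linarith+
    then show ?thesis
      using t(2,3) by simp
  qed
  then have "eta G = a" "eta G = b"
    using eta_eqI[OF assms] by auto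
  then show False
    using t(1) by simp
qed

lemma lattice_pt_eta:
  fixes P G :: "(real^'n) set"
  assumes "reflexive_polytope P" "G facet_of P"
  shows "lattice_pt (eta G)"
proof -
  obtain T where "\<forall>x\<in>T. lattice_pt x" "dual_polytope P = convex hull T"
    using assms(1) unfolding reflexive_polytope_def lattice_polytope_def by blast
  then show ?thesis
    using eta_extreme_point_of_dual[OF _ assms(2)] assms(1) extreme_point_of_convex_hull
    by (metis reflexive_polytope_def)
qed

lemma mem_dual_polytopeI:
  fixes P :: "(real^'n) set"
  assumes "compact P" "convex P" "\<And>x. x extreme_point_of P \<Longrightarrow> -1 \<le> inner a x"
  shows "a \<in> dual_polytope P"
proof -
  have "convex hull {x. x extreme_point_of P} \<subseteq> {x. -1 \<le> inner a x}"
    using assms(3) by (intro hull_minimal) (auto simp: convex_halfspace_ge)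
  then show ?thesis
    using Krein_Milman_Minkowski[OF assms(1,2)] by (auto simp: dual_polytope_def)
qed

lemma card_extreme_points_in_facet_le:
  fixes P G :: "(real^'n) set"
  assumes "simplicial_polytope P" "G facet_of P"
    and "A \<subseteq> G" "\<And>a. a \<in> A \<Longrightarrow> a extreme_point_of P"
  shows "int (card A) \<le> aff_dim P"
proof -
  obtain k where k: "k simplex G"
    using assms(1,2) by (auto simp: simplicial_polytope_def)
  then obtain C where C: "finite C" "int (card C) = k + 1" "G = convex hull C"
    by (auto simp: simplex)
  have "aff_dim G = k"
    using k by (rule aff_dim_simplex)
  have "a extreme_point_of G" if "a \<in> A" for a
    using assms(3,4) that extreme_point_of_face[OF facet_of_imp_face_of[OF assms(2)]] by blast
  then have "A \<subseteq> C"
    using C(3) extreme_point_of_convex_hull by blast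
  then have "card A \<le> card C"
    using C(1) card_mono by blast
  then show ?thesis
    using C(2) \<open>aff_dim G = k\<close> assms(2) by (simp add: facet_of_def)
qed

lemma facet_of_polyhedron_avoiding:
  assumes "polyhedron P" "R face_of P" "R \<noteq> {}" "x \<in> P" "x \<notin> R"
  obtains G where "G facet_of P" "R \<subseteq> G" "x \<notin> G"
proof -
  have "R = \<Inter>{G. G facet_of P \<and> R \<subseteq> G}"
    using face_of_polyhedron[OF assms(1,2,3)] assms(4,5) by blast
  then show ?thesis
    using that assms(5) by blast
qed

lemma sum_mult_eq_if_const_off:
  fixes q f :: "'a \<Rightarrow> real"
  assumes "finite A" "i \<in> A" "sum q A = 0" "\<And>j. j \<in> A \<Longrightarrow> j \<noteq> i \<Longrightarrow> f j = c"
  shows "(\<Sum>j\<in>A. q j * f j) = q i * (f i - c)"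
proof -
  have "(\<Sum>j\<in>A. q j * f j) = (\<Sum>j\<in>A. q j * (f j - c))"
    using assms(3) by (simp add: right_diff_distrib sum_subtractf flip: sum_distrib_right)
  also have "\<dots> = q i * (f i - c)"
    using assms by (simp add: sum.remove)
  finally show ?thesis .
qed

lemma sum_signs_scaleR:
  fixes q :: "'a \<Rightarrow> real" and e :: "'a \<Rightarrow> 'b::real_vector"
  assumes "finite A" "\<And>i. i \<in> A \<Longrightarrow> q i \<in> {-1, 0, 1}"
  shows "(\<Sum>i\<in>A. q i *\<^sub>R e i) = (\<Sum>j\<in>{j\<in>A. q j = 1}. e j) - (\<Sum>i\<in>{i\<in>A. q i = -1}. e i)"
proof -
  have "(\<Sum>i\<in>A. q i *\<^sub>R e i)
      = (\<Sum>i\<in>A. (if q i = 1 then e i else 0) - (if q i = -1 then e i else 0))"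
    using assms(2) by (intro sum.cong) auto
  then show ?thesis
    using assms(1) by (simp add: sum_subtractf sum.inter_filter)
qed

locale opposite_facets =
  fixes P F :: "(real^'n) set" and e estar :: "'n \<Rightarrow> real^'n"
    and v :: "real^'n" and q :: "'n \<Rightarrow> real"
  assumes reflexive: "reflexive_polytope P"
    and simplicial: "simplicial_polytope P"
    and F: "F facet_of P"
    and negF: "uminus ` F facet_of P"
    and e_inj: "inj e"
    and e_verts: "{x. x extreme_point_of F} = range e"
    and estar: "\<And>i j. inner (estar i) (e j) = (if i = j then 1 else 0)"
    and v: "v extreme_point_of P"
    and uv: "inner (eta F) v = 0"
    and q: "v = (\<Sum>i\<in>UNIV. q i *\<^sub>R e i)"
begin

lemma fano: "fano_polytope P"
  using reflexive by (simp add: reflexive_polytope_def)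

lemma F_eq_convex_hull: "F = convex hull (range e)"
proof -
  have "compact F" "convex F"
    using F fano_polytopeD[OF fano]
    by (auto intro: face_of_imp_compact face_of_imp_convex facet_of_imp_face_of)
  then show ?thesis
    using Krein_Milman_Minkowski e_verts by metis
qed

lemma e_mem_F: "e j \<in> F"
  using e_verts by (auto simp: extreme_point_of_def)

lemma e_extreme: "e j extreme_point_of P"
  using e_verts e_mem_F extreme_point_of_face[OF facet_of_imp_face_of[OF F]] by blast

lemma minus_e_extreme: "(- e j) extreme_point_of P"
proof -
  have "(- e j) extreme_point_of uminus ` F"
    using extreme_points_of_uminus_image[of F] e_verts by auto
  then show ?thesis
    using extreme_point_of_face[OF facet_of_imp_face_of[OF negF]] by blast
qed

lemma
  shows e_mem_P: "e j \<in> P" and minus_e_mem_P: "- e j \<in> P" and v_mem_P: "v \<in> P"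
    and lattice_pt_e: "lattice_pt (e j)" and lattice_pt_v: "lattice_pt v"
  using e_extreme minus_e_extreme v fano_polytopeD(6)[OF fano] by (auto simp: extreme_point_of_def)

lemma inner_eta_F: "x \<in> F \<Longrightarrow> inner (eta F) x = -1"
  using eta_facet(2)[OF fano F] by blast

lemma inner_eta_F_e: "inner (eta F) (e j) = -1"
  using inner_eta_F e_mem_F by blast

lemma eta_uminus_F: "eta (uminus ` F) = - eta F"
  using inner_eta_F by (intro eta_eqI[OF fano negF]) auto

lemma inner_eta_F_le: "x \<in> P \<Longrightarrow> inner (eta F) x \<le> 1"
  using eta_facet(1)[OF fano negF] by (simp add: eta_uminus_F)

lemma uminus_F_eq: "uminus ` F = P \<inter> {x. inner (eta F) x = 1}"
  using eta_facet(2)[OF fano negF] by (simp add: eta_uminus_F)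

lemma inner_v: "inner w v = (\<Sum>j\<in>UNIV. q j * inner w (e j))"
  by (simp add: q inner_sum_right)

lemma sum_q: "sum q UNIV = 0"
  using uv by (simp add: inner_v inner_eta_F_e sum_negf)

lemma eq_if_inner_e_eq:
  assumes "\<And>j. inner a (e j) = inner b (e j)"
  shows "a = b"
proof -
  have "F \<subseteq> {x. inner (a - b) x = 0}"
    unfolding F_eq_convex_hull using assms convex_hyperplane[of "a - b" 0]
    by (intro hull_minimal) (auto simp: inner_diff_left)
  then have "eta F = eta F + (a - b)"
    using inner_eta_F by (intro eta_eqI[OF fano F]) (auto simp: inner_add_left)
  then show ?thesis
    by simp
qed

definition adjacent_facet :: "'n \<Rightarrow> (real^'n) set \<Rightarrow> bool" where
  "adjacent_facet i G \<longleftrightarrow> G facet_of P \<and> (\<forall>j. j \<noteq> i \<longrightarrow> e j \<in> G) \<and> e i \<notin> G"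

lemma adjacent_facetI:
  assumes "G facet_of P" "G \<inter> F = convex hull (e ` (UNIV - {i}))"
  shows "adjacent_facet i G"
proof -
  have "e j \<in> G" if "j \<noteq> i" for j
    using assms(2) that hull_inc[of "e j" "e ` (UNIV - {i})"] by blast
  moreover have "e i \<notin> G"
  proof
    assume "e i \<in> G"
    then have "e i extreme_point_of convex hull (e ` (UNIV - {i}))"
      using assms(2) e_verts e_mem_F unfolding extreme_point_of_def by blast
    then show False
      using extreme_point_of_convex_hull e_inj by (fastforce dest: injD)
  qed
  ultimately show ?thesis
    using assms(1) by (simp add: adjacent_facet_def)
qed

lemma adjacent_facet_exists:
  assumes "j \<noteq> i"
  obtains G where "adjacent_facet i G"
proof -
  define R where "R = F \<inter> {x. inner (estar i) x = 0}"
  have "F \<subseteq> {x. 0 \<le> inner (estar i) x}"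
    unfolding F_eq_convex_hull using estar by (intro hull_minimal) (auto simp: convex_halfspace_ge)
  then have "R face_of F"
    unfolding R_def using F_eq_convex_hull by (intro face_of_Int_supporting_hyperplane_ge) auto
  then have "R face_of P"
    using face_of_trans facet_of_imp_face_of[OF F] by blast
  moreover have R: "e k \<in> R" if "k \<noteq> i" for k
    using that estar e_mem_F by (simp add: R_def)
  moreover have "e i \<notin> R"
    using estar by (simp add: R_def)
  ultimately obtain G where "G facet_of P" "R \<subseteq> G" "e i \<notin> G"
    using facet_of_polyhedron_avoiding[OF fano_polytopeD(1)[OF fano]] e_mem_P R[OF assms] by blast
  then show ?thesis
    using that R by (auto simp: adjacent_facet_def)
qed

lemma minus_e_notin_adjacent_facet:
  assumes "adjacent_facet i G" "v \<in> G"
  shows "- e i \<notin> G"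
proof
  assume "- e i \<in> G"
  have G: "G facet_of P" and ej: "\<And>j. j \<noteq> i \<Longrightarrow> e j \<in> G"
    using assms(1) by (auto simp: adjacent_facet_def)
  define A where "A = insert v (insert (- e i) (e ` (UNIV - {i})))"
  have "card (e ` (UNIV - {i})) = CARD('n) - 1"
    using e_inj by (simp add: card_image inj_on_subset card_Diff_singleton)
  moreover have "v \<notin> e ` (UNIV - {i})" "- e i \<notin> e ` (UNIV - {i})" "v \<noteq> - e i"
    using uv inner_eta_F_e[of i]
    by (auto simp: inner_eta_F_e dest: arg_cong[where f = "inner (eta F)"])
  ultimately have "card A = CARD('n) + 1"
    by (simp add: A_def)
  moreover have "int (card A) \<le> int CARD('n)"
    using card_extreme_points_in_facet_le[OF simplicial G, of A] fano_polytopeD(4)[OF fano]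
      ej assms(2) \<open>- e i \<in> G\<close> v minus_e_extreme e_extreme
    by (auto simp: A_def)
  ultimately show False
    by simp
qed

lemma negative_coefficient:
  assumes adj: "adjacent_facet i G"
  shows "q i < 0 \<longleftrightarrow> v \<in> G" and "q i < 0 \<Longrightarrow> q i = -1 \<and> inner (eta G) (e i) = 0"
proof -
  have G: "G facet_of P" and ej: "\<And>j. j \<noteq> i \<Longrightarrow> e j \<in> G" and ei: "e i \<notin> G"
    using adj by (auto simp: adjacent_facet_def)
  define w where "w = eta G"
  have w_lattice: "lattice_pt w"
    unfolding w_def using lattice_pt_eta[OF reflexive G] .
  have w_ge: "x \<in> P \<Longrightarrow> -1 \<le> inner w x"
    and mem_G: "x \<in> P \<Longrightarrow> x \<in> G \<longleftrightarrow> inner w x = -1" for x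
    unfolding w_def using eta_facet[OF fano G] by auto
  have w_ei_Ints: "inner w (e i) \<in> \<int>" and w_v_Ints: "inner w v \<in> \<int>"
    using lattice_pt_inner_Ints w_lattice lattice_pt_e lattice_pt_v by auto
  have "-1 < inner w (e i)"
    using w_ge[OF e_mem_P[of i]] mem_G[OF e_mem_P[of i]] ei by fastforce
  then have w_ei_ge: "0 \<le> inner w (e i)"
    using Ints_less_imp_add_one_le[of "-1"] w_ei_Ints by fastforce
  have w_ei_le: "inner w (e i) \<le> 1"
    using w_ge[OF minus_e_mem_P[of i]] by simp
  have w_v: "inner w v = q i * (inner w (e i) + 1)"
    using sum_mult_eq_if_const_off[OF _ _ sum_q, of i "\<lambda>j. inner w (e j)" "-1"] ej mem_G e_mem_P
    by (simp add: inner_v)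
  have v_G_iff: "q i < 0 \<longleftrightarrow> v \<in> G"
  proof
    assume "q i < 0"
    then have "inner w v < 0"
      using w_ei_ge by (simp add: w_v mult_neg_pos)
    then have "inner w v = -1"
      using Ints_less_imp_add_one_le[of _ 0] w_v_Ints w_ge[OF v_mem_P] by fastforce
    then show "v \<in> G"
      using mem_G[OF v_mem_P] by simp
  next
    assume "v \<in> G"
    then have "q i * (inner w (e i) + 1) = -1"
      using mem_G[OF v_mem_P] w_v by simp
    then show "q i < 0"
      using w_ei_ge by (smt (verit) mult_nonneg_nonneg)
  qed
  show "q i < 0 \<longleftrightarrow> v \<in> G"
    by (fact v_G_iff)
  assume "q i < 0"
  have "inner w (e i) \<noteq> 1"
  proof
    assume "inner w (e i) = 1"
    then have "- e i \<in> G"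
      using mem_G[OF minus_e_mem_P[of i]] by simp
    then show False
      using minus_e_notin_adjacent_facet[OF adj] v_G_iff \<open>q i < 0\<close> by blast
  qed
  then have "inner w (e i) = 0"
    using Ints_less_imp_add_one_le[of 0] w_ei_Ints w_ei_ge w_ei_le by fastforce
  moreover have "inner w v = -1"
    using v_G_iff \<open>q i < 0\<close> mem_G[OF v_mem_P] by blast
  ultimately show "q i = -1 \<and> inner (eta G) (e i) = 0"
    using w_v by (simp add: w_def)
qed

lemma inner_eta_adjacent_facet_e:
  assumes "adjacent_facet i G" "q i < 0"
  shows "inner (eta G) (e j) = (if j = i then 0 else -1)"
  using negative_coefficient(2)[OF assms(1)] assms eta_facet(2)[OF fano]
  by (auto simp: adjacent_facet_def)

lemma dual_basis_eq_eta_diff: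
  assumes "adjacent_facet i G" "q i < 0"
  shows "estar i = eta G - eta F"
  using inner_eta_adjacent_facet_e[OF assms]
  by (intro eq_if_inner_e_eq) (simp add: estar inner_diff_left inner_eta_F_e)

lemma lattice_pt_dual_basis:
  assumes "adjacent_facet i G" "q i < 0"
  shows "lattice_pt (estar i)"
  using dual_basis_eq_eta_diff[OF assms] lattice_pt_diff lattice_pt_eta reflexive F assms(1)
  by (metis adjacent_facet_def)

lemma dual_basis_mem_dual_polytope:
  assumes "adjacent_facet i G" "q i < 0"
  shows "estar i \<in> dual_polytope P"
proof (rule mem_dual_polytopeI[OF fano_polytopeD(2,3)[OF fano]])
  have G: "G facet_of P"
    using assms(1) by (simp add: adjacent_facet_def)
  fix x
  assume "x extreme_point_of P"
  then have x: "x \<in> P" "lattice_pt x"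
    using fano_polytopeD(6)[OF fano] by (auto simp: extreme_point_of_def)
  have "F \<subseteq> {y. inner (eta G) y \<le> 0}"
    unfolding F_eq_convex_hull using inner_eta_adjacent_facet_e[OF assms]
    by (intro hull_minimal) (auto simp: convex_halfspace_le)
  then have nonneg_on_uminus_F: "0 \<le> inner (eta G) y" if "y \<in> uminus ` F" for y
    using that by auto
  have "-2 < inner (estar i) x"
  proof (rule ccontr)
    assume "\<not> -2 < inner (estar i) x"
    then have "inner (eta G) x - inner (eta F) x \<le> -2"
      using dual_basis_eq_eta_diff[OF assms] by (simp add: inner_diff_left)
    then have "inner (eta F) x = 1" "inner (eta G) x = -1"
      using eta_facet(1)[OF fano G x(1)] inner_eta_F_le[OF x(1)] by linarith+
    then show False
      using nonneg_on_uminus_F[of x] uminus_F_eq x(1) by simp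
  qed
  moreover have "inner (estar i) x \<in> \<int>"
    using lattice_pt_inner_Ints[OF lattice_pt_dual_basis[OF assms] x(2)] .
  ultimately show "-1 \<le> inner (estar i) x"
    using Ints_less_imp_add_one_le[of "-2"] by fastforce
qed

lemma opposite_facets_uminus:
  "opposite_facets P (uminus ` F) (\<lambda>i. - e i) (\<lambda>i. - estar i) v (\<lambda>i. - q i)"
proof
  show "uminus ` uminus ` F facet_of P"
    using F by (simp add: image_image)
  show "inj (\<lambda>i. - e i)"
    using e_inj by (simp add: inj_def)
  show "{x. x extreme_point_of uminus ` F} = range (\<lambda>i. - e i)"
    by (simp add: extreme_points_of_uminus_image e_verts image_image)
  show "inner (eta (uminus ` F)) v = 0"
    using uv by (simp add: eta_uminus_F)
  show "v = (\<Sum>i\<in>UNIV. - q i *\<^sub>R - e i)"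
    using q by simp
qed (use reflexive simplicial negF v estar in auto)

lemma positive_coefficient:
  assumes "0 < q i"
  shows "q i = 1"
proof -
  interpret opp: opposite_facets P "uminus ` F" "\<lambda>i. - e i" "\<lambda>i. - estar i" v "\<lambda>i. - q i"
    by (rule opposite_facets_uminus)
  have "\<not> (\<forall>j. 0 \<le> q j)"
    using assms sum_q member_le_sum[of i UNIV q] by auto
  then obtain j where "q j < 0"
    by (auto simp: not_le)
  then have "j \<noteq> i"
    using assms by auto
  then obtain G where "opp.adjacent_facet i G"
    by (rule opp.adjacent_facet_exists)
  then show ?thesis
    using opp.negative_coefficient(2) assms by fastforce
qed

lemma coefficient_cases: "q i \<in> {-1, 0, 1}"
proof -
  interpret opp: opposite_facets P "uminus ` F" "\<lambda>i. - e i" "\<lambda>i. - estar i" v "\<lambda>i. - q i"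
    by (rule opposite_facets_uminus)
  show ?thesis
    using positive_coefficient[of i] opp.positive_coefficient[of i] by force
qed

lemma vertex_signed_sum:
  obtains I J where "I \<inter> J = {}" "card I = card J" "v = (\<Sum>j\<in>J. e j) - (\<Sum>i\<in>I. e i)"
proof
  let ?I = "{i. q i = -1}" and ?J = "{j. q j = 1}"
  show "?I \<inter> ?J = {}"
    by auto
  show "v = (\<Sum>j\<in>?J. e j) - (\<Sum>i\<in>?I. e i)"
    using q sum_signs_scaleR[of UNIV q e] coefficient_cases by simp
  have "sum q UNIV = real (card ?J) - real (card ?I)"
    using sum_signs_scaleR[of UNIV q "\<lambda>_. 1 :: real"] coefficient_cases by simp
  then show "card ?I = card ?J"
    using sum_q by simp
qed

end

theorem lemma3p1:
  fixes P F :: "(real^'n) set"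
    and e estar :: "'n \<Rightarrow> real^'n"
    and Fi :: "'n \<Rightarrow> (real^'n) set"
    and v :: "real^'n"
    and q :: "'n \<Rightarrow> real"
  assumes refl: "reflexive_polytope P"
    and simp: "simplicial_polytope P"
    and F: "F facet_of P"
    and negF: "uminus ` F facet_of P"
    and e_inj: "inj e"
    and e_verts: "{x. x extreme_point_of F} = range e"
    and estar: "\<And>i j. inner (estar i) (e j) = (if i = j then 1 else 0)"
    and Fi: "\<And>i. Fi i facet_of P"
    and Fi_int: "\<And>i. Fi i \<inter> F = convex hull (e ` (UNIV - {i}))"
    and v: "v extreme_point_of P"
    and uv: "inner (eta F) v = 0"
    and q: "v = (\<Sum>i\<in>UNIV. q i *\<^sub>R e i)"
    and q_rat: "\<And>i. q i \<in> \<rat>"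
  shows "(\<forall>i. (q i < 0 \<longleftrightarrow> q i = -1) \<and> (q i = -1 \<longleftrightarrow> v \<in> Fi i) \<and>
            (q i < 0 \<longrightarrow> estar i = eta (Fi i) - eta F \<and>
                         estar i \<in> dual_polytope P \<and> lattice_pt (estar i)))
         \<and> (\<exists>I J :: 'n set. I \<inter> J = {} \<and> card I = card J \<and>
              v = (\<Sum>j\<in>J. e j) - (\<Sum>i\<in>I. e i))"
proof -
  interpret opposite_facets P F e estar v q
    using refl simp F negF e_inj e_verts estar v uv q by unfold_locales
  have "(q i < 0 \<longleftrightarrow> q i = -1) \<and> (q i = -1 \<longleftrightarrow> v \<in> Fi i) \<and>
        (q i < 0 \<longrightarrow> estar i = eta (Fi i) - eta F \<and>
                     estar i \<in> dual_polytope P \<and> lattice_pt (estar i))" for i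
  proof -
    have adj: "adjacent_facet i (Fi i)"
      using Fi Fi_int by (rule adjacent_facetI)
    show ?thesis
      using coefficient_cases[of i] negative_coefficient(1)[OF adj]
        dual_basis_eq_eta_diff[OF adj] dual_basis_mem_dual_polytope[OF adj]
        lattice_pt_dual_basis[OF adj]
      by auto
  qed
  moreover obtain I J where "I \<inter> J = {}" "card I = card J" "v = (\<Sum>j\<in>J. e j) - (\<Sum>i\<in>I. e i)"
    by (rule vertex_signed_sum)
  ultimately show ?thesis
    by blast
qed

end
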